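(* Let $\alpha\ge0$ and $\rho\in\mathcal{R}_\alpha$. (a) $I_\rho$ is regularly varying of order $(1-\alpha)_+=\max(1-\alpha,0)$, and $$\limsup_{n,M\to\infty}\frac{M\sum_{\ell=1}^n\rho(\ell M)}{I_\rho(nM)}<\infty .$$ If moreover $I_\rho(\infty)<\infty$, then $\limsup_{M\to\infty}M\sum_{\ell=1}^\infty\rho(\ell M)=0$. (b) Suppose $\alpha\in[0,1]$, that $\rho(x)\to0$ as $x\to\infty$ when $\alpha=0$, and that $I_\rho(\infty)=\infty$ when $\alpha=1$. Fix $\mu>0$ and set $M=M(T):=\mu I_\rho(T)$. Then $$\lim_{T\to\infty}\sum_{\ell=1}^{\lceil T/M\rceil}\rho(\ell M)=\frac1\mu .$$
   Context: For $\alpha\ge0$, $\mathcal{R}_\alpha$ denotes the set of measurable functions $\rho:[0,\infty)\to(0,1]$ that are regularly varying of order $-\alpha$, i.e. $\lim_{t\to\infty}\rho(\lambda t)/\rho(t)=\lambda^{-\alpha}$ for every $\lambda>0$. $I_\rho(t):=\int_0^t\rho(s)ds$ and $I_\rho(\infty):=\int_0^\infty\rho(s)ds$. A positive measurable function $f$ is regularly varying of order $\beta$ if $f(\lambda t)/f(t)\to\lambda^\beta$ as $t\to\infty$ for every $\lambda>0$. *)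

theory Defs
  imports "HOL-Analysis.Analysis"
begin

definition RV_class :: "real \<Rightarrow> (real \<Rightarrow> real) \<Rightarrow> bool" where
  "RV_class \<alpha> \<rho> \<longleftrightarrow>
     \<rho> \<in> borel_measurable (restrict_space lborel {0..}) \<and>
     (\<forall>t\<ge>0. 0 < \<rho> t \<and> \<rho> t \<le> 1) \<and>
     (\<forall>c>0. ((\<lambda>t. \<rho> (c * t) / \<rho> t) \<longlongrightarrow> c powr (- \<alpha>)) at_top)"

definition regularly_varying :: "real \<Rightarrow> (real \<Rightarrow> real) \<Rightarrow> bool" where
  "regularly_varying \<beta> f \<longleftrightarrow>
     f \<in> borel_measurable (restrict_space lborel {0..}) \<and>
     (\<forall>t>0. 0 < f t) \<and>
     (\<forall>c>0. ((\<lambda>t. f (c * t) / f t) \<longlongrightarrow> c powr \<beta>) at_top)"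

definition Irho :: "(real \<Rightarrow> real) \<Rightarrow> real \<Rightarrow> real" where
  "Irho \<rho> t = (LINT x:{0..t}|lborel. \<rho> x)"

definition Irho_inf :: "(real \<Rightarrow> real) \<Rightarrow> ennreal" where
  "Irho_inf \<rho> = (\<integral>\<^sup>+ x. indicator {0..} x * ennreal (\<rho> x) \<partial>lborel)"

end

theory Submission
  imports Defs "HOL-Real_Asymp.Real_Asymp"
begin

text \<open>Write \<open>\<rho> x = x powr - \<alpha> * \<ell> x\<close>. The uniform convergence theorem for the slowly varying
  \<open>\<ell>\<close> yields Potter's bounds: for every \<open>e > 0\<close> and large \<open>s \<le> t\<close> the ratio \<open>\<rho> s / \<rho> t\<close> lies between
  \<open>exp (- e) * (t / s) powr (\<alpha> - e)\<close> and \<open>exp e * (t / s) powr (\<alpha> + e)\<close>. Integrating them gives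
  Karamata's theorem for \<open>I = Irho \<rho>\<close>: \<open>I t \<sim> t * \<rho> t / (1 - \<alpha>)\<close> for \<open>\<alpha> < 1\<close> and \<open>t * \<rho> t = o (I t)\<close> for
  \<open>\<alpha> \<ge> 1\<close>, whence the regular variation of \<open>I\<close>. Over a factor 2, Potter's bounds make \<open>\<rho>\<close>
  almost constant, so \<open>M * \<rho> (l * M)\<close> is comparable to the integral of \<open>\<rho>\<close> over the cell
  \<open>[(l - 1) * M, l * M]\<close> and the grid sums are comparable to \<open>I\<close>. For \<open>M = \<mu> * I T\<close> and
  \<open>\<lceil>T / M\<rceil>\<close> cells the grid sum is \<open>I T / M = 1 / \<mu>\<close> up to errors controlled by \<open>\<rho> \<longlonglongrightarrow> 0\<close>
  and \<open>I M / I T \<longlonglongrightarrow> 0\<close>.\<close>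

section \<open>The uniform convergence theorem\<close>

lemma eventually_measure_small_increments:
  fixes k :: "real \<Rightarrow> real" and z :: "nat \<Rightarrow> real"
  assumes [measurable]: "k \<in> borel_measurable lborel"
    and increments: "\<And>u. ((\<lambda>x. k (x + u) - k x) \<longlongrightarrow> 0) at_top"
    and z: "filterlim z at_top sequentially" and e: "e > 0"
  defines "A n \<equiv> {y\<in>{0..2}. \<forall>m\<ge>n. \<bar>k (z m + y) - k (z m)\<bar> < e}"
  shows "A n \<in> lmeasurable" and "\<forall>\<^sub>F n in sequentially. 3/2 < measure lebesgue (A n)"
proof -
  have sets: "A n \<in> sets lborel" for n
  proof -
    have "{y \<in> space lborel. y \<in> {0..2} \<and> (\<forall>m\<in>{n..}. \<bar>k (z m + y) - k (z m)\<bar> < e)} \<in> sets lborel"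
      by measurable
    then show ?thesis unfolding A_def by (simp add: atLeast_def)
  qed
  have sub: "A n \<subseteq> {0..2}" for n unfolding A_def by auto
  show "A n \<in> lmeasurable" for n
    using sets bounded_subset[OF bounded_closed_interval sub] by (intro bounded_set_imp_lmeasurable) auto
  have "(\<Union>n. A n) = {0..2}"
  proof (intro equalityI subsetI)
    fix y :: real assume y: "y \<in> {0..2}"
    have "\<forall>\<^sub>F m in sequentially. \<bar>k (z m + y) - k (z m)\<bar> < e"
      using filterlim_compose[OF increments z] e by (auto simp: tendsto_iff dist_real_def)
    then show "y \<in> (\<Union>n. A n)" using y by (auto simp: A_def eventually_sequentially)
  qed (auto simp: A_def)
  moreover have "incseq A" unfolding A_def incseq_def by auto
  ultimately have "(\<lambda>n. emeasure lborel (A n)) \<longlonglongrightarrow> ennreal 2"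
    using Lim_emeasure_incseq[of A lborel] sets by auto
  then have "\<forall>\<^sub>F n in sequentially. ennreal (3/2) < emeasure lborel (A n)"
    by (rule order_tendstoD) (simp add: ennreal_less_iff)
  then show "\<forall>\<^sub>F n in sequentially. 3/2 < measure lebesgue (A n)"
  proof (rule eventually_mono)
    fix n assume less: "ennreal (3/2) < emeasure lborel (A n)"
    have "emeasure lborel (A n) \<le> emeasure lborel {0..2::real}"
      using sub by (intro emeasure_mono) auto
    then have "emeasure lborel (A n) = ennreal (measure lborel (A n))"
      by (intro emeasure_eq_ennreal_measure) (auto simp: top_unique)
    with less sets show "3/2 < measure lebesgue (A n)"
      by (simp add: ennreal_less_iff)
  qed
qed

text \<open>Two intervals of length 2
  on which the increments of \<open>k\<close> are small for the base points \<open>x\<close> and \<open>x + u\<close> must overlap in a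
  set of positive measure; a common point \<open>y\<close> bounds \<open>k (x + u) - k x\<close> by two small increments.\<close>

lemma uniform_convergence_increments:
  fixes k :: "real \<Rightarrow> real"
  assumes k: "k \<in> borel_measurable lborel"
    and increments: "\<And>u. ((\<lambda>x. k (x + u) - k x) \<longlongrightarrow> 0) at_top" and e: "e > 0"
  shows "\<exists>X. \<forall>x\<ge>X. \<forall>u\<in>{0..1}. \<bar>k (x + u) - k x\<bar> < e"
proof (rule ccontr)
  assume "\<not> ?thesis"
  then have "\<forall>n::nat. \<exists>x\<ge>real n. \<exists>u\<in>{0..1}. e \<le> \<bar>k (x + u) - k x\<bar>" by (simp add: not_less)
  then obtain xs us where xs: "\<And>n. real n \<le> xs n" and us: "\<And>n. us n \<in> {0..1}"
    and bad: "\<And>n. e \<le> \<bar>k (xs n + us n) - k (xs n)\<bar>"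
    by metis
  define ys where "ys n = xs n + us n" for n
  have "real n \<le> ys n" for n
    using xs[of n] us[of n] by (simp add: ys_def)
  then have xs_lim: "filterlim xs at_top sequentially" and ys_lim: "filterlim ys at_top sequentially"
    using xs by (auto intro!: filterlim_at_top_mono[OF filterlim_real_sequentially])
  have e2: "0 < e/2" using e by simp
  define A where "A n = {y\<in>{0..2::real}. \<forall>m\<ge>n. \<bar>k (xs m + y) - k (xs m)\<bar> < e/2}" for n
  define B where "B n = {y\<in>{0..2::real}. \<forall>m\<ge>n. \<bar>k (ys m + y) - k (ys m)\<bar> < e/2}" for n
  note A = eventually_measure_small_increments[OF k increments xs_lim e2, folded A_def]
    and B = eventually_measure_small_increments[OF k increments ys_lim e2, folded B_def]
  obtain N where NA: "3/2 < measure lebesgue (A N)" and NB: "3/2 < measure lebesgue (B N)"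
    using eventually_conj[OF A(2) B(2)] by (auto simp: eventually_sequentially)
  define C where "C = (+) (us N) ` B N"
  have A_N: "A N \<in> lmeasurable" and C: "C \<in> lmeasurable"
    using A(1) measurable_translation[OF B(1)] by (auto simp: C_def)
  have "A N \<inter> C \<noteq> {}"
  proof
    assume "A N \<inter> C = {}"
    then have "measure lebesgue (A N \<union> C) = measure lebesgue (A N) + measure lebesgue C"
      using measure_Un3[OF A_N C] by simp
    also have "\<dots> > 3"
      using NA NB by (simp add: C_def measure_translation)
    finally have "3 < measure lebesgue (A N \<union> C)" .
    moreover have "A N \<union> C \<subseteq> {0..3}"
      using us[of N] by (auto simp: A_def B_def C_def)
    then have "measure lebesgue (A N \<union> C) \<le> measure lebesgue {0..3::real}"
      using A_N C by (intro measure_mono_fmeasurable) auto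
    ultimately show False by simp
  qed
  then obtain y z where "y \<in> A N" "z \<in> B N" "y = us N + z"
    by (auto simp: C_def)
  then have "\<bar>k (xs N + y) - k (xs N)\<bar> < e/2" "\<bar>k (xs N + y) - k (ys N)\<bar> < e/2"
    by (auto simp: A_def B_def ys_def add.assoc)
  with bad[of N] show False unfolding ys_def by linarith
qed

lemma increments_linear_bound:
  fixes k :: "real \<Rightarrow> real"
  assumes k: "k \<in> borel_measurable lborel"
    and increments: "\<And>u. ((\<lambda>x. k (x + u) - k x) \<longlongrightarrow> 0) at_top" and e: "e > 0"
  shows "\<exists>X. \<forall>x\<ge>X. \<forall>u\<ge>0. \<bar>k (x + u) - k x\<bar> \<le> e * (u + 1)"
proof -
  obtain X where X: "\<And>x u. X \<le> x \<Longrightarrow> u \<in> {0..1} \<Longrightarrow> \<bar>k (x + u) - k x\<bar> < e"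
    using uniform_convergence_increments[OF k increments e] by blast
  have steps: "\<bar>k (x + u) - k x\<bar> \<le> e * real n"
    if "X \<le> x" "0 \<le> u" "u \<le> real n" for n x u
    using that
  proof (induction n arbitrary: u)
    case 0
    then show ?case using X[of x 0] by simp
  next
    case (Suc n)
    show ?case
    proof (cases "u \<le> 1")
      case True
      then have "\<bar>k (x + u) - k x\<bar> < e" using X Suc by auto
      also have "e \<le> e * real (Suc n)" using e by simp
      finally show ?thesis by simp
    next
      case False
      have "\<bar>k (x + (u - 1)) - k x\<bar> \<le> e * real n" using Suc False by simp
      moreover have "\<bar>k (x + (u - 1) + 1) - k (x + (u - 1))\<bar> < e"
        using X[of "x + (u - 1)" 1] Suc False by simp
      ultimately show ?thesis by (simp add: algebra_simps)
    qed
  qed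
  show ?thesis
  proof (intro exI allI impI)
    fix x u :: real assume "X \<le> x" "0 \<le> u"
    then have "\<bar>k (x + u) - k x\<bar> \<le> e * real (nat \<lceil>u\<rceil>)"
      by (intro steps) linarith+
    also have "\<dots> \<le> e * (u + 1)"
      using e \<open>0 \<le> u\<close> by (intro mult_left_mono) linarith+
    finally show "\<bar>k (x + u) - k x\<bar> \<le> e * (u + 1)" .
  qed
qed

section \<open>Power integrals and limits by approximation\<close>

lemma has_integral_powr_ratio:
  fixes a b r :: real
  assumes "0 < a" "a \<le> b" "r \<noteq> 1"
  shows "((\<lambda>s. (b / s) powr r) has_integral b * (1 - (a / b) powr (1 - r)) / (1 - r)) {a..b}"
proof -
  have "((\<lambda>s. s powr (- r)) has_integral
          (\<lambda>s. s powr (1 - r) / (1 - r)) b - (\<lambda>s. s powr (1 - r) / (1 - r)) a) {a..b}"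
  proof (rule fundamental_theorem_of_calculus)
    fix s assume "s \<in> {a..b}"
    then have "0 < s" using assms by auto
    have "((\<lambda>s. s powr (1 - r) / (1 - r)) has_real_derivative (1 - r) * s powr (1 - r - 1) / (1 - r)) (at s)"
      using has_real_derivative_powr[OF \<open>0 < s\<close>] by (rule DERIV_cdivide)
    then show "((\<lambda>s. s powr (1 - r) / (1 - r)) has_vector_derivative s powr (- r)) (at s within {a..b})"
      using assms by (simp add: has_real_derivative_iff_has_vector_derivative[symmetric]
          has_field_derivative_at_within)
  qed (use assms in simp)
  then have "((\<lambda>s. b powr r * s powr (- r)) has_integral
          b powr r * ((b powr (1 - r) - a powr (1 - r)) / (1 - r))) {a..b}"
    by (intro has_integral_mult_right) (simp add: diff_divide_distrib)
  also have "b powr r * ((b powr (1 - r) - a powr (1 - r)) / (1 - r))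
      = b powr r * b powr (1 - r) * (1 - (a / b) powr (1 - r)) / (1 - r)"
    using assms by (simp add: powr_divide field_simps)
  also have "b powr r * b powr (1 - r) = b"
    using assms by (simp flip: powr_add)
  finally show ?thesis
    using assms by (simp add: powr_divide powr_minus_divide cong: has_integral_cong)
qed

lemma tendsto_by_approximate_bounds:
  fixes f :: "'a \<Rightarrow> real" and g h :: "real \<Rightarrow> real"
  assumes "\<forall>\<^sub>F e in at_right 0. \<forall>\<^sub>F x in F. g e \<le> f x \<and> f x \<le> h e"
    and "(g \<longlongrightarrow> L) (at_right 0)" "(h \<longlongrightarrow> L) (at_right 0)"
  shows "(f \<longlongrightarrow> L) F"
proof (rule order_tendstoI)
  fix a assume "a < L"
  then obtain e where "a < g e" "\<forall>\<^sub>F x in F. g e \<le> f x \<and> f x \<le> h e"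
    using eventually_happens'[OF trivial_limit_at_right_real
        eventually_conj[OF order_tendstoD(1)[OF assms(2) \<open>a < L\<close>] assms(1)]]
    by blast
  then show "\<forall>\<^sub>F x in F. a < f x" by (auto elim: eventually_mono)
next
  fix a assume "L < a"
  then obtain e where "h e < a" "\<forall>\<^sub>F x in F. g e \<le> f x \<and> f x \<le> h e"
    using eventually_happens'[OF trivial_limit_at_right_real
        eventually_conj[OF order_tendstoD(2)[OF assms(3) \<open>L < a\<close>] assms(1)]]
    by blast
  then show "\<forall>\<^sub>F x in F. f x < a" by (auto elim: eventually_mono)
qed

section \<open>Integrals and grid sums of densities bounded by 1\<close>

locale unit_density =
  fixes \<rho> :: "real \<Rightarrow> real"
  assumes measurable: "\<rho> \<in> borel_measurable (restrict_space lborel {0..})"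
    and pos: "0 \<le> t \<Longrightarrow> 0 < \<rho> t" and le_1: "0 \<le> t \<Longrightarrow> \<rho> t \<le> 1"
begin

lemma indicator_nonneg_times_measurable: "(\<lambda>x. indicator {0..} x * \<rho> x) \<in> borel_measurable lborel"
  using measurable by (subst (asm) borel_measurable_restrict_space_iff) auto

lemma indicator_times_measurable: "(\<lambda>x. indicator {a..b} x * \<rho> x) \<in> borel_measurable lborel"
  if "0 \<le> a"
proof -
  have "(\<lambda>x. indicator {a..b} x * (indicator {0..} x * \<rho> x)) \<in> borel_measurable lborel"
    using indicator_nonneg_times_measurable by measurable
  also have "(\<lambda>x. indicator {a..b} x * (indicator {0..} x * \<rho> x)) = (\<lambda>x. indicator {a..b} x * \<rho> x)"
    using that by (auto simp: indicator_def)
  finally show ?thesis .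
qed

lemma set_integrable: "0 \<le> a \<Longrightarrow> set_integrable lborel {a..b} \<rho>"
  by (rule set_integrable_bound[where f = "\<lambda>_. 1::real"])
    (use pos le_1 indicator_times_measurable[of a b] in \<open>auto intro!: AE_I2 borel_integrable_atLeastAtMost'
      simp: set_borel_measurable_def abs_of_pos\<close>)

lemma integrable_on: "0 \<le> a \<Longrightarrow> \<rho> integrable_on {a..b}"
  using set_borel_integral_eq_integral(1)[OF set_integrable] by blast

lemma Irho_eq_integral: "0 \<le> t \<Longrightarrow> Irho \<rho> t = integral {0..t} \<rho>"
  unfolding Irho_def using set_borel_integral_eq_integral(2)[OF set_integrable] by simp

lemma Irho_diff: "0 \<le> a \<Longrightarrow> a \<le> b \<Longrightarrow> Irho \<rho> b - Irho \<rho> a = integral {a..b} \<rho>"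
  using Henstock_Kurzweil_Integration.integral_combine[where a = 0 and c = a and b = b and f = \<rho>]
    integrable_on[of 0 b] Irho_eq_integral
  by auto

lemma Irho_diff_le:
  assumes "0 \<le> a" "a \<le> b" "\<And>x. x \<in> {a..b} \<Longrightarrow> \<rho> x \<le> g x" "g integrable_on {a..b}"
  shows "Irho \<rho> b - Irho \<rho> a \<le> integral {a..b} g"
  using integral_le[of \<rho> "{a..b}" g] assms integrable_on Irho_diff by auto

lemma Irho_diff_ge:
  assumes "0 \<le> a" "a \<le> b" "\<And>x. x \<in> {a..b} \<Longrightarrow> g x \<le> \<rho> x" "g integrable_on {a..b}"
  shows "integral {a..b} g \<le> Irho \<rho> b - Irho \<rho> a"
  using integral_le[of g "{a..b}" \<rho>] assms integrable_on Irho_diff by auto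

lemma Irho_diff_le_const:
  assumes "0 \<le> a" "a \<le> b" "\<And>x. x \<in> {a..b} \<Longrightarrow> \<rho> x \<le> K"
  shows "Irho \<rho> b - Irho \<rho> a \<le> K * (b - a)"
  using Irho_diff_le[of a b "\<lambda>_. K"] assms by (simp add: mult.commute integrable_const_ivl)

lemma Irho_diff_ge_const:
  assumes "0 \<le> a" "a \<le> b" "\<And>x. x \<in> {a..b} \<Longrightarrow> K \<le> \<rho> x"
  shows "K * (b - a) \<le> Irho \<rho> b - Irho \<rho> a"
  using Irho_diff_ge[of a b "\<lambda>_. K"] assms by (simp add: mult.commute integrable_const_ivl)

lemma Irho_mono:
  assumes "0 \<le> a" "a \<le> b" shows "Irho \<rho> a \<le> Irho \<rho> b"
proof -
  have "0 * (b - a) \<le> Irho \<rho> b - Irho \<rho> a"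
    using assms by (intro Irho_diff_ge_const) (auto intro!: less_imp_le[OF pos])
  then show ?thesis by simp
qed

lemma Irho_0 [simp]: "Irho \<rho> 0 = 0"
  by (simp add: Irho_eq_integral)

lemma Irho_nonneg: "0 \<le> t \<Longrightarrow> 0 \<le> Irho \<rho> t"
  using Irho_mono[of 0 t] by simp

lemma Irho_le: "0 \<le> t \<Longrightarrow> Irho \<rho> t \<le> t"
  using Irho_diff_le_const[of 0 t 1] le_1 by auto

lemma Irho_pos:
  assumes "0 < t" shows "0 < Irho \<rho> t"
proof (rule ccontr)
  assume "\<not> 0 < Irho \<rho> t"
  then have "integral\<^sup>L lborel (\<lambda>x. indicator {0..t} x *\<^sub>R \<rho> x) = 0"
    using Irho_nonneg[of t] assms by (simp add: Irho_def set_lebesgue_integral_def)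
  moreover have "integrable lborel (\<lambda>x. indicator {0..t} x *\<^sub>R \<rho> x)"
    using set_integrable[of 0 t] by (simp add: set_integrable_def)
  moreover have "AE x in lborel. 0 \<le> indicator {0..t} x *\<^sub>R \<rho> x"
    using pos by (auto intro!: AE_I2 simp: indicator_def less_imp_le)
  ultimately have "AE x in lborel. indicator {0..t} x *\<^sub>R \<rho> x = 0"
    by (simp add: integral_nonneg_eq_0_iff_AE)
  moreover have "{x\<in>space lborel. indicator {0..t} x *\<^sub>R \<rho> x \<noteq> 0} = {0..t}"
    by (fastforce simp: indicator_def dest: pos)
  ultimately have "emeasure lborel {0..t} = 0"
    using AE_iff_measurable[of "{0..t}" lborel] by auto
  then show False using assms by simp
qed

lemma Irho_measurable: "Irho \<rho> \<in> borel_measurable (restrict_space lborel {0..})"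
proof -
  have "mono_on {0..} (Irho \<rho>)" by (auto intro!: mono_onI Irho_mono)
  then have "Irho \<rho> \<in> borel_measurable (restrict_space borel {0..})"
    by (rule borel_measurable_mono_on_fnc)
  then show ?thesis
    by (subst measurable_cong_sets[OF _ refl]) (auto simp: sets_restrict_space)
qed

lemma ennreal_Irho:
  assumes "0 \<le> t"
  shows "ennreal (Irho \<rho> t) = (\<integral>\<^sup>+ x. ennreal (indicator {0..t} x * \<rho> x) \<partial>lborel)"
proof -
  have "integrable lborel (\<lambda>x. indicator {0..t} x * \<rho> x)"
    using set_integrable[of 0 t] by (simp add: set_integrable_def)
  then have "(\<integral>\<^sup>+ x. ennreal (indicator {0..t} x * \<rho> x) \<partial>lborel)
      = ennreal (integral\<^sup>L lborel (\<lambda>x. indicator {0..t} x * \<rho> x))"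
    using pos by (intro nn_integral_eq_integral) (auto intro!: AE_I2 simp: indicator_def less_imp_le)
  then show ?thesis
    by (simp add: Irho_def set_lebesgue_integral_def)
qed

lemma Irho_le_Irho_inf: "0 \<le> t \<Longrightarrow> ennreal (Irho \<rho> t) \<le> Irho_inf \<rho>"
  unfolding ennreal_Irho Irho_inf_def by (intro nn_integral_mono) (auto simp: indicator_def)

lemma Irho_inf_eq_SUP: "Irho_inf \<rho> = (SUP n::nat. ennreal (Irho \<rho> (real n)))"
proof -
  define f where "f n x = ennreal (indicator {0..real n} x * \<rho> x)" for n :: nat and x
  have "incseq f"
    using pos by (intro incseq_SucI le_funI) (auto simp: f_def indicator_def less_imp_le)
  moreover have "f n \<in> borel_measurable lborel" for n
    using measurable_compose[OF indicator_times_measurable[of 0 "real n"] measurable_ennreal]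
    by (simp add: f_def[abs_def])
  moreover have "(SUP n. f n x) = indicator {0..} x * ennreal (\<rho> x)" for x
  proof (cases "0 \<le> x")
    case True
    then have "f (nat \<lceil>x\<rceil>) x = indicator {0..} x * ennreal (\<rho> x)"
      "\<And>n. f n x \<le> indicator {0..} x * ennreal (\<rho> x)"
      by (auto simp: f_def indicator_def real_nat_ceiling_ge)
    then show ?thesis by (metis (no_types, lifting) SUP_upper UNIV_I antisym SUP_least)
  qed (simp add: f_def)
  ultimately have "Irho_inf \<rho> = (SUP n. integral\<^sup>N lborel (f n))"
    unfolding Irho_inf_def by (simp flip: nn_integral_monotone_convergence_SUP)
  then show ?thesis
    by (simp add: f_def[abs_def] ennreal_Irho)
qed

lemma Irho_at_top_if_Irho_inf_infinite:
  assumes "Irho_inf \<rho> = \<infinity>" shows "filterlim (Irho \<rho>) at_top at_top"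
  unfolding filterlim_at_top
proof
  fix Z :: real
  have "ennreal Z < (SUP n::nat. ennreal (Irho \<rho> (real n)))"
    using assms by (simp flip: Irho_inf_eq_SUP)
  then obtain n :: nat where "ennreal Z < ennreal (Irho \<rho> (real n))"
    by (auto simp: less_SUP_iff)
  then have Z: "Z \<le> Irho \<rho> (real n)"
    by (meson ennreal_leI leD le_cases)
  show "\<forall>\<^sub>F t in at_top. Z \<le> Irho \<rho> t"
    using eventually_ge_at_top[of "real n"]
    by eventually_elim (meson Z Irho_mono of_nat_0_le_iff order_trans)
qed

lemma Irho_tail_small:
  assumes "Irho_inf \<rho> < \<infinity>" "0 < \<epsilon>"
  shows "\<exists>t1\<ge>0. \<forall>t\<ge>0. Irho \<rho> t - Irho \<rho> t1 \<le> \<epsilon>"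
proof -
  have "Irho \<rho> t \<le> enn2real (Irho_inf \<rho>)" if "0 \<le> t" for t
    using enn2real_mono[OF Irho_le_Irho_inf[OF that]] assms Irho_nonneg[OF that] by simp
  then have bdd: "bdd_above (Irho \<rho> ` {0..})"
    by (intro bdd_aboveI[of _ "enn2real (Irho_inf \<rho>)"]) auto
  define S where "S = (SUP t\<in>{0..}. Irho \<rho> t)"
  obtain t1 where "0 \<le> t1" "S - \<epsilon> < Irho \<rho> t1"
    using less_cSUP_iff[OF _ bdd, of "S - \<epsilon>"] \<open>0 < \<epsilon>\<close> by (auto simp: S_def)
  moreover have "Irho \<rho> t \<le> S" if "0 \<le> t" for t
    unfolding S_def using bdd that by (intro cSUP_upper) auto
  ultimately show ?thesis by force
qed

lemma Irho_div_tendsto_0: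
  assumes "(\<rho> \<longlongrightarrow> 0) at_top" shows "((\<lambda>t. Irho \<rho> t / t) \<longlongrightarrow> 0) at_top"
proof (rule order_tendstoI)
  fix a :: real assume "a < 0"
  show "\<forall>\<^sub>F t in at_top. a < Irho \<rho> t / t"
    using eventually_ge_at_top[of 0]
    by eventually_elim (use \<open>a < 0\<close> Irho_nonneg in \<open>auto intro: less_le_trans\<close>)
next
  fix b :: real assume "0 < b"
  then obtain x0 where x0: "\<And>x. x0 \<le> x \<Longrightarrow> \<rho> x < b/2"
    using order_tendstoD(2)[OF assms, of "b/2"] by (auto simp: eventually_at_top_linorder)
  show "\<forall>\<^sub>F t in at_top. Irho \<rho> t / t < b"
    using eventually_gt_at_top[of "2 * max x0 0 / b"] eventually_ge_at_top[of "max x0 0"]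
  proof eventually_elim
    case (elim t)
    define s where "s = max x0 0"
    have "0 \<le> s" "s \<le> t" "s < b/2 * t"
      using elim \<open>0 < b\<close> by (auto simp: s_def field_simps)
    have "Irho \<rho> t = Irho \<rho> s + (Irho \<rho> t - Irho \<rho> s)" by simp
    also have "\<dots> \<le> s + b/2 * (t - s)"
      using Irho_le[OF \<open>0 \<le> s\<close>] Irho_diff_le_const[of s t "b/2"] x0 \<open>0 \<le> s\<close> \<open>s \<le> t\<close>
      by (force simp: s_def less_imp_le)
    also have "\<dots> < b * t"
      using \<open>s < b/2 * t\<close> mult_nonneg_nonneg[of b s] \<open>0 \<le> s\<close> \<open>0 < b\<close>
        right_diff_distrib[of "b/2" t s]
      by linarith
    finally show ?case
      using \<open>0 \<le> s\<close> \<open>s \<le> t\<close> \<open>0 < b\<close> by (simp add: divide_less_eq)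
  qed
qed

lemma Irho_diff_doubling_bounds:
  assumes doubling: "\<And>s t. \<tau> \<le> s \<Longrightarrow> s \<le> t \<Longrightarrow> t \<le> 2 * s \<Longrightarrow> \<rho> t \<le> C * \<rho> s"
    and "0 < \<tau>" "0 < C" "\<tau> \<le> a" "a \<le> b" "b \<le> 2 * a"
  shows "(b - a) * \<rho> b \<le> C * (Irho \<rho> b - Irho \<rho> a)"
    and "Irho \<rho> b - Irho \<rho> a \<le> C * \<rho> a * (b - a)"
proof -
  have "\<rho> b / C * (b - a) \<le> Irho \<rho> b - Irho \<rho> a"
    using assms doubling[of _ b] by (intro Irho_diff_ge_const) (auto simp: field_simps)
  then show "(b - a) * \<rho> b \<le> C * (Irho \<rho> b - Irho \<rho> a)"
    using \<open>0 < C\<close> by (simp add: field_simps)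
  show "Irho \<rho> b - Irho \<rho> a \<le> C * \<rho> a * (b - a)"
    using assms doubling[of a] by (intro Irho_diff_le_const) auto
qed

lemma grid_sum_le_Irho:
  assumes doubling: "\<And>s t. \<tau> \<le> s \<Longrightarrow> s \<le> t \<Longrightarrow> t \<le> 2 * s \<Longrightarrow> \<rho> t \<le> C * \<rho> s"
    and "0 < \<tau>" "0 < C" "\<tau> \<le> M" "1 \<le> N"
  shows "M * (\<Sum>l=1..N. \<rho> (real l * M)) \<le> M * \<rho> M + C * (Irho \<rho> (real N * M) - Irho \<rho> M)"
  using \<open>1 \<le> N\<close>
proof (induction N rule: dec_induct)
  case (step n)
  have "M \<le> real n * M"
    using assms step(1) by (simp add: mult_le_cancel_right1)
  with assms have "\<tau> \<le> real n * M" by linarith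
  with step(1)
  have "M * \<rho> (real (Suc n) * M) \<le> C * (Irho \<rho> (real (Suc n) * M) - Irho \<rho> (real n * M))"
    using Irho_diff_doubling_bounds(1)[where \<tau> = \<tau> and C = C and a = "real n * M"
        and b = "real (Suc n) * M", OF doubling] assms
    by (simp add: algebra_simps mult_right_mono)
  with step.IH show ?case by (simp add: algebra_simps)
qed simp

lemma Irho_le_grid_sum:
  assumes doubling: "\<And>s t. \<tau> \<le> s \<Longrightarrow> s \<le> t \<Longrightarrow> t \<le> 2 * s \<Longrightarrow> \<rho> t \<le> C * \<rho> s"
    and "0 < \<tau>" "0 < C" "\<tau> \<le> M"
  shows "Irho \<rho> (real (Suc N) * M) - Irho \<rho> M \<le> C * (M * (\<Sum>l=1..N. \<rho> (real l * M)))"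
proof (induction N)
  case (Suc n)
  have "M \<le> real (Suc n) * M"
    using assms by (simp add: mult_le_cancel_right1)
  with assms have "\<tau> \<le> real (Suc n) * M" by linarith
  then have "Irho \<rho> (real (Suc (Suc n)) * M) - Irho \<rho> (real (Suc n) * M)
      \<le> C * (M * \<rho> (real (Suc n) * M))"
    using Irho_diff_doubling_bounds(2)[where \<tau> = \<tau> and C = C and a = "real (Suc n) * M"
        and b = "real (Suc (Suc n)) * M", OF doubling] assms
    by (simp add: algebra_simps mult_right_mono)
  with Suc.IH show ?case by (simp add: algebra_simps)
qed simp

lemma grid_sum_le_Irho_half:
  assumes doubling: "\<And>s t. \<tau> \<le> s \<Longrightarrow> s \<le> t \<Longrightarrow> t \<le> 2 * s \<Longrightarrow> \<rho> t \<le> C * \<rho> s"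
    and "0 < \<tau>" "0 < C" "2 * \<tau> \<le> M" "1 \<le> N"
  shows "M * (\<Sum>l=1..N. \<rho> (real l * M)) \<le> 2 * C * (Irho \<rho> (real N * M) - Irho \<rho> (M / 2))"
proof -
  have "M * (\<Sum>l=1..N. \<rho> (real l * M)) \<le> M * \<rho> M + C * (Irho \<rho> (real N * M) - Irho \<rho> M)"
    using assms by (intro grid_sum_le_Irho[OF doubling]) auto
  also have "M * \<rho> M \<le> 2 * C * (Irho \<rho> M - Irho \<rho> (M / 2))"
    using Irho_diff_doubling_bounds(1)[where \<tau> = \<tau> and C = C and a = "M / 2" and b = M, OF doubling]
      assms by simp
  also have "C * Irho \<rho> M \<le> C * Irho \<rho> (real N * M)"
    using assms mult_right_mono[of 1 "real N" M] by (intro mult_left_mono Irho_mono) auto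
  then have "2 * C * (Irho \<rho> M - Irho \<rho> (M / 2)) + C * (Irho \<rho> (real N * M) - Irho \<rho> M)
      \<le> 2 * C * (Irho \<rho> (real N * M) - Irho \<rho> (M / 2))"
    by (simp add: algebra_simps)
  finally show ?thesis by simp
qed

lemma grid_sum_bounds:
  assumes doubling: "\<And>s t. \<tau> \<le> s \<Longrightarrow> s \<le> t \<Longrightarrow> t \<le> 2 * s \<Longrightarrow> \<rho> t \<le> C * \<rho> s"
    and "0 < \<tau>" "0 < C" "\<tau> \<le> M" "0 < T" and tail: "\<And>x. T \<le> x \<Longrightarrow> \<rho> x \<le> \<eta>"
  defines "N \<equiv> nat \<lceil>T / M\<rceil>"
  shows "Irho \<rho> T - Irho \<rho> M \<le> C * (M * (\<Sum>l=1..N. \<rho> (real l * M)))"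
    and "M * (\<Sum>l=1..N. \<rho> (real l * M)) \<le> M * \<rho> M + C * (Irho \<rho> T - Irho \<rho> M + \<eta> * M)"
proof -
  have "0 < M" "0 < T / M" using assms by simp_all
  have "T / M \<le> real N" "real N \<le> T / M + 1"
    unfolding N_def using \<open>0 < T / M\<close> by linarith+
  then have "T \<le> real N * M" "real N * M \<le> T + M"
    using \<open>0 < M\<close> by (simp_all add: field_simps)
  have "1 \<le> N"
    using \<open>0 < T / M\<close> \<open>T / M \<le> real N\<close> by simp
  have "Irho \<rho> T \<le> Irho \<rho> (real (Suc N) * M)"
    using \<open>0 < T\<close> \<open>0 < M\<close> \<open>T \<le> real N * M\<close> by (intro Irho_mono) (auto simp: algebra_simps)
  then show "Irho \<rho> T - Irho \<rho> M \<le> C * (M * (\<Sum>l=1..N. \<rho> (real l * M)))"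
    using Irho_le_grid_sum[OF doubling assms(2-4), of N] by simp
  have "Irho \<rho> (real N * M) - Irho \<rho> T \<le> \<eta> * (real N * M - T)"
    using \<open>0 < T\<close> \<open>T \<le> real N * M\<close> tail by (intro Irho_diff_le_const) auto
  also have "\<dots> \<le> \<eta> * M"
    using \<open>real N * M \<le> T + M\<close> tail[of T] pos[of T] \<open>0 < T\<close> by (intro mult_left_mono) auto
  finally have "C * (Irho \<rho> (real N * M) - Irho \<rho> M) \<le> C * (Irho \<rho> T - Irho \<rho> M + \<eta> * M)"
    using \<open>0 < C\<close> by (intro mult_left_mono) auto
  then show "M * (\<Sum>l=1..N. \<rho> (real l * M)) \<le> M * \<rho> M + C * (Irho \<rho> T - Irho \<rho> M + \<eta> * M)"
    using grid_sum_le_Irho[OF doubling assms(2-4) \<open>1 \<le> N\<close>] by simp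
qed


lemma ennreal_grid_series_eq_SUP:
  assumes "0 \<le> M"
  shows "ennreal M * (\<Sum>l. ennreal (\<rho> (real (Suc l) * M)))
    = (SUP n. ennreal (M * (\<Sum>l=1..n. \<rho> (real l * M))))"
proof -
  have "(\<Sum>l<n. ennreal (\<rho> (real (Suc l) * M))) = ennreal (\<Sum>l=1..n. \<rho> (real l * M))" for n
    using pos assms by (simp add: sum.atLeast1_atMost_eq less_imp_le)
  then show ?thesis
    using assms pos
    by (simp add: suminf_eq_SUP SUP_mult_left_ennreal ennreal_mult sum_nonneg less_imp_le)
qed

lemma Irho_scaled_ratio_tendsto_0:
  assumes "(\<rho> \<longlongrightarrow> 0) at_top" "filterlim (Irho \<rho>) at_top at_top" "0 < \<mu>"
  shows "((\<lambda>T. Irho \<rho> (\<mu> * Irho \<rho> T) / Irho \<rho> T) \<longlongrightarrow> 0) at_top"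
proof -
  have "filterlim (\<lambda>T. \<mu> * Irho \<rho> T) at_top at_top"
    by (rule filterlim_tendsto_pos_mult_at_top[OF tendsto_const \<open>0 < \<mu>\<close> assms(2)])
  then have "((\<lambda>T. \<mu> * (Irho \<rho> (\<mu> * Irho \<rho> T) / (\<mu> * Irho \<rho> T))) \<longlongrightarrow> \<mu> * 0) at_top"
    by (intro tendsto_intros filterlim_compose[OF Irho_div_tendsto_0[OF assms(1)]])
  moreover have "\<forall>\<^sub>F T in at_top.
      \<mu> * (Irho \<rho> (\<mu> * Irho \<rho> T) / (\<mu> * Irho \<rho> T)) = Irho \<rho> (\<mu> * Irho \<rho> T) / Irho \<rho> T"
    using eventually_gt_at_top[of 0] by eventually_elim (use Irho_pos \<open>0 < \<mu>\<close> in simp)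
  ultimately show ?thesis by (auto intro: Lim_transform_eventually)
qed

end

section \<open>Regularly varying densities\<close>

locale regularly_varying_density = unit_density +
  fixes \<alpha> :: real
  assumes index_nonneg: "0 \<le> \<alpha>"
    and ratio_tendsto: "0 < c \<Longrightarrow> ((\<lambda>t. \<rho> (c * t) / \<rho> t) \<longlongrightarrow> c powr - \<alpha>) at_top"
begin

text \<open>Potter's bounds in logarithmic form: \<open>k x = ln (\<rho> (exp x)) + \<alpha> * x\<close> has increments tending
  to 0, so by the uniform convergence theorem they grow at most linearly, with arbitrarily small slope.\<close>

lemma potter_log:
  assumes "0 < e"
  shows "\<exists>\<tau>>0. \<forall>s t. \<tau> \<le> s \<longrightarrow> s \<le> t \<longrightarrow>
           \<bar>ln (\<rho> t) - ln (\<rho> s) + \<alpha> * (ln t - ln s)\<bar> \<le> e * (ln t - ln s + 1)"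
proof -
  define k where "k x = ln (\<rho> (exp x)) + \<alpha> * x" for x
  have "(\<lambda>x. indicator {0..} (exp x) * \<rho> (exp x)) \<in> borel_measurable lborel"
    using measurable_compose[OF _ indicator_nonneg_times_measurable, of exp lborel] by measurable
  then have [measurable]: "(\<lambda>x. \<rho> (exp x)) \<in> borel_measurable lborel"
    by (simp add: indicator_def less_imp_le)
  have k: "k \<in> borel_measurable lborel"
    unfolding k_def by measurable
  have "((\<lambda>x. k (x + u) - k x) \<longlongrightarrow> 0) at_top" for u
  proof -
    have "((\<lambda>x. ln (\<rho> (exp u * exp x) / \<rho> (exp x)) + \<alpha> * u) \<longlongrightarrow> ln (exp u powr - \<alpha>) + \<alpha> * u) at_top"
      using filterlim_compose[OF ratio_tendsto[of "exp u"] exp_at_top] by (intro tendsto_intros) auto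
    moreover have "ln (\<rho> (exp u * exp x) / \<rho> (exp x)) + \<alpha> * u = k (x + u) - k x" for x
      using pos[of "exp x"] pos[of "exp u * exp x"]
      by (simp add: k_def exp_add ln_div algebra_simps mult.commute)
    ultimately show ?thesis by (simp add: ln_powr)
  qed
  then obtain X where X: "\<And>x u. X \<le> x \<Longrightarrow> 0 \<le> u \<Longrightarrow> \<bar>k (x + u) - k x\<bar> \<le> e * (u + 1)"
    using increments_linear_bound[OF k _ assms] by blast
  show ?thesis
  proof (intro exI[of _ "exp X"] conjI allI impI)
    fix s t assume "exp X \<le> s" "s \<le> t"
    then have "0 < s" "0 < t" "0 \<le> ln t - ln s"
      using exp_gt_zero[of X] by (auto simp del: exp_gt_zero)
    moreover have "X \<le> ln s"
      using \<open>exp X \<le> s\<close> \<open>0 < s\<close> by (metis exp_le_cancel_iff exp_ln)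
    ultimately show "\<bar>ln (\<rho> t) - ln (\<rho> s) + \<alpha> * (ln t - ln s)\<bar> \<le> e * (ln t - ln s + 1)"
      using X[of "ln s" "ln t - ln s"] by (simp add: k_def right_diff_distrib)
  qed simp
qed

lemma potter_bounds:
  assumes "0 < e"
  shows "\<exists>\<tau>>0. \<forall>s t. \<tau> \<le> s \<longrightarrow> s \<le> t \<longrightarrow>
           \<rho> s \<le> exp e * \<rho> t * (t / s) powr (\<alpha> + e) \<and> exp (- e) * \<rho> t * (t / s) powr (\<alpha> - e) \<le> \<rho> s"
proof -
  obtain \<tau> where "0 < \<tau>" and P: "\<And>s t. \<tau> \<le> s \<Longrightarrow> s \<le> t \<Longrightarrow>
      \<bar>ln (\<rho> t) - ln (\<rho> s) + \<alpha> * (ln t - ln s)\<bar> \<le> e * (ln t - ln s + 1)"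
    using potter_log[OF assms] by blast
  show ?thesis
  proof (intro exI[of _ \<tau>] conjI allI impI)
    fix s t assume "\<tau> \<le> s" "s \<le> t"
    then have "0 < s" "0 < t" "0 < \<rho> s" "0 < \<rho> t"
      using \<open>0 < \<tau>\<close> pos[of s] pos[of t] by auto
    define u where "u = ln t - ln s"
    have powr_u: "(t / s) powr c = exp (c * u)" for c
      using \<open>0 < s\<close> \<open>0 < t\<close> by (simp add: powr_def u_def ln_div)
    have "\<bar>ln (\<rho> t) - ln (\<rho> s) + \<alpha> * u\<bar> \<le> e * (u + 1)"
      using P[OF \<open>\<tau> \<le> s\<close> \<open>s \<le> t\<close>] by (simp add: u_def)
    then have "ln (\<rho> s) \<le> e + ln (\<rho> t) + (\<alpha> + e) * u" "- e + ln (\<rho> t) + (\<alpha> - e) * u \<le> ln (\<rho> s)"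
      by (auto simp: algebra_simps abs_le_iff)
    then have "exp (ln (\<rho> s)) \<le> exp (e + ln (\<rho> t) + (\<alpha> + e) * u)"
      "exp (- e + ln (\<rho> t) + (\<alpha> - e) * u) \<le> exp (ln (\<rho> s))"
      by simp_all
    then show "\<rho> s \<le> exp e * \<rho> t * (t / s) powr (\<alpha> + e)"
      "exp (- e) * \<rho> t * (t / s) powr (\<alpha> - e) \<le> \<rho> s"
      using \<open>0 < \<rho> s\<close> \<open>0 < \<rho> t\<close> by (simp_all add: powr_u exp_add exp_diff exp_minus field_simps)
  qed (use \<open>0 < \<tau>\<close> in simp)
qed

lemma eventually_doubling_bound:
  assumes "0 < e"
  shows "\<exists>\<tau>>0. \<forall>s t. \<tau> \<le> s \<longrightarrow> s \<le> t \<longrightarrow> t \<le> 2 * s \<longrightarrow> \<rho> t \<le> exp e * \<rho> s"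
proof -
  obtain \<tau> where "0 < \<tau>" and P: "\<And>s t. \<tau> \<le> s \<Longrightarrow> s \<le> t \<Longrightarrow>
      \<bar>ln (\<rho> t) - ln (\<rho> s) + \<alpha> * (ln t - ln s)\<bar> \<le> e / 2 * (ln t - ln s + 1)"
    using potter_log[of "e / 2"] assms by auto
  show ?thesis
  proof (intro exI[of _ \<tau>] conjI allI impI)
    fix s t assume "\<tau> \<le> s" "s \<le> t" "t \<le> 2 * s"
    then have "0 < s" "0 < t" "0 \<le> ln t - ln s"
      using \<open>0 < \<tau>\<close> by auto
    have "ln t \<le> ln (2 * s)"
      using \<open>0 < t\<close> \<open>t \<le> 2 * s\<close> by simp
    then have "ln t - ln s \<le> ln 2"
      using \<open>0 < s\<close> by (simp add: ln_mult)
    then have "ln (\<rho> t) - ln (\<rho> s) \<le> e / 2 * (ln t - ln s + 1) - \<alpha> * (ln t - ln s)"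
      using P[OF \<open>\<tau> \<le> s\<close> \<open>s \<le> t\<close>] by linarith
    also have "\<dots> \<le> e / 2 * 2"
      using \<open>0 \<le> ln t - ln s\<close> \<open>ln t - ln s \<le> ln 2\<close> ln_2_less_1 index_nonneg assms
        mult_left_mono[of "ln t - ln s + 1" 2 "e / 2"] mult_nonneg_nonneg[of \<alpha> "ln t - ln s"]
      by linarith
    finally have "exp (ln (\<rho> t)) \<le> exp (e + ln (\<rho> s))" by simp
    then show "\<rho> t \<le> exp e * \<rho> s"
      using pos[of s] pos[of t] \<open>0 < s\<close> \<open>0 < t\<close> by (simp add: exp_add)
  qed (use \<open>0 < \<tau>\<close> in simp)
qed

lemma Irho_upper_bound:
  assumes "0 < e" "\<alpha> + e < 1"
  shows "\<exists>\<tau>>0. \<forall>t\<ge>\<tau>. Irho \<rho> t \<le> \<tau> + exp e * (t * \<rho> t) / (1 - (\<alpha> + e))"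
proof -
  obtain \<tau> where "0 < \<tau>" and P: "\<And>s t. \<tau> \<le> s \<Longrightarrow> s \<le> t \<Longrightarrow> \<rho> s \<le> exp e * \<rho> t * (t / s) powr (\<alpha> + e)"
    using potter_bounds[OF \<open>0 < e\<close>] by blast
  show ?thesis
  proof (intro exI[of _ \<tau>] conjI allI impI)
    fix t assume "\<tau> \<le> t"
    define r where "r = \<alpha> + e"
    have int: "((\<lambda>s. exp e * \<rho> t * (t / s) powr r) has_integral
           exp e * \<rho> t * (t * (1 - (\<tau> / t) powr (1 - r)) / (1 - r))) {\<tau>..t}"
      using has_integral_powr_ratio[of \<tau> t r] \<open>0 < \<tau>\<close> \<open>\<tau> \<le> t\<close> assms(2)
      by (intro has_integral_mult_right) (auto simp: r_def)
    have "Irho \<rho> t - Irho \<rho> \<tau> \<le> integral {\<tau>..t} (\<lambda>s. exp e * \<rho> t * (t / s) powr r)"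
      using \<open>0 < \<tau>\<close> \<open>\<tau> \<le> t\<close> P has_integral_integrable[OF int] by (intro Irho_diff_le) (auto simp: r_def)
    also have "\<dots> = exp e * \<rho> t * (t * (1 - (\<tau> / t) powr (1 - r)) / (1 - r))"
      by (rule integral_unique[OF int])
    also have "\<dots> \<le> exp e * (t * \<rho> t) / (1 - r)"
      using \<open>0 < \<tau>\<close> \<open>\<tau> \<le> t\<close> pos[of t] assms(2)
      by (simp add: r_def divide_right_mono mult_left_mono mult.assoc mult.left_commute)
    finally show "Irho \<rho> t \<le> \<tau> + exp e * (t * \<rho> t) / (1 - (\<alpha> + e))"
      using Irho_le[of \<tau>] \<open>0 < \<tau>\<close> by (simp add: r_def)
  qed (fact \<open>0 < \<tau>\<close>)
qed

lemma Irho_lower_bound: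
  assumes "0 < e" "r \<le> \<alpha> - e" "r < 1"
  shows "\<exists>\<tau>>0. \<forall>t\<ge>\<tau>. exp (- e) * (t * \<rho> t) * (1 - (\<tau> / t) powr (1 - r)) / (1 - r) \<le> Irho \<rho> t"
proof -
  obtain \<tau> where "0 < \<tau>" and P: "\<And>s t. \<tau> \<le> s \<Longrightarrow> s \<le> t \<Longrightarrow> exp (- e) * \<rho> t * (t / s) powr (\<alpha> - e) \<le> \<rho> s"
    using potter_bounds[OF \<open>0 < e\<close>] by blast
  show ?thesis
  proof (intro exI[of _ \<tau>] conjI allI impI)
    fix t assume "\<tau> \<le> t"
    have int: "((\<lambda>s. exp (- e) * \<rho> t * (t / s) powr r) has_integral
           exp (- e) * \<rho> t * (t * (1 - (\<tau> / t) powr (1 - r)) / (1 - r))) {\<tau>..t}"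
      using has_integral_powr_ratio[of \<tau> t r] \<open>0 < \<tau>\<close> \<open>\<tau> \<le> t\<close> assms(3)
      by (intro has_integral_mult_right) auto
    have "exp (- e) * \<rho> t * (t / s) powr r \<le> \<rho> s" if "s \<in> {\<tau>..t}" for s
    proof -
      have "(t / s) powr r \<le> (t / s) powr (\<alpha> - e)"
        using that \<open>0 < \<tau>\<close> assms(2) by (intro powr_mono) auto
      then show ?thesis
        using P[of s t] that pos[of t] \<open>0 < \<tau>\<close> by (auto intro: order.trans[rotated] mult_left_mono)
    qed
    then have "integral {\<tau>..t} (\<lambda>s. exp (- e) * \<rho> t * (t / s) powr r) \<le> Irho \<rho> t - Irho \<rho> \<tau>"
      using \<open>0 < \<tau>\<close> \<open>\<tau> \<le> t\<close> has_integral_integrable[OF int] by (intro Irho_diff_ge) auto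
    then have "exp (- e) * \<rho> t * (t * (1 - (\<tau> / t) powr (1 - r)) / (1 - r)) \<le> Irho \<rho> t - Irho \<rho> \<tau>"
      unfolding integral_unique[OF int] .
    then show "exp (- e) * (t * \<rho> t) * (1 - (\<tau> / t) powr (1 - r)) / (1 - r) \<le> Irho \<rho> t"
      using Irho_nonneg[of \<tau>] \<open>0 < \<tau>\<close> by (simp add: mult_ac)
  qed (fact \<open>0 < \<tau>\<close>)
qed

lemma t_rho_at_top:
  assumes "\<alpha> < 1" shows "filterlim (\<lambda>t. t * \<rho> t) at_top at_top"
proof -
  define e where "e = (1 - \<alpha>) / 2"
  have "0 < e" using assms by (simp add: e_def)
  then obtain \<tau> where "0 < \<tau>" and P: "\<And>s t. \<tau> \<le> s \<Longrightarrow> s \<le> t \<Longrightarrow> \<rho> s \<le> exp e * \<rho> t * (t / s) powr (\<alpha> + e)"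
    using potter_bounds by blast
  define c where "c = \<rho> \<tau> * exp (- e) * \<tau> powr (\<alpha> + e)"
  have "0 < c" using pos[of \<tau>] \<open>0 < \<tau>\<close> by (simp add: c_def)
  have "filterlim (\<lambda>t. c * t powr (1 - (\<alpha> + e))) at_top at_top"
    using \<open>0 < c\<close> assms
    by (intro filterlim_tendsto_pos_mult_at_top[OF tendsto_const] real_powr_at_top)
      (auto simp: e_def field_simps)
  moreover have "\<forall>\<^sub>F t in at_top. c * t powr (1 - (\<alpha> + e)) \<le> t * \<rho> t"
    using eventually_ge_at_top[of \<tau>]
  proof eventually_elim
    case (elim t)
    then have "0 < t" using \<open>0 < \<tau>\<close> by simp
    have "c \<le> \<rho> t * t powr (\<alpha> + e)"
      using P[OF order.refl elim] \<open>0 < \<tau>\<close> \<open>0 < t\<close>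
      by (simp add: c_def powr_divide exp_minus field_simps)
    then have "c * t powr (1 - (\<alpha> + e)) \<le> \<rho> t * t powr (\<alpha> + e) * t powr (1 - (\<alpha> + e))"
      by (rule mult_right_mono) simp
    also have "\<dots> = t * \<rho> t"
      using \<open>0 < t\<close> by (simp add: mult.assoc flip: powr_add)
    finally show ?case .
  qed
  ultimately show ?thesis by (rule filterlim_at_top_mono)
qed

lemma Irho_div_t_rho_approximation:
  assumes "0 < e" "\<alpha> + e < 1"
  shows "\<forall>\<^sub>F t in at_top. exp (- e) * (1 - e) / (1 - (\<alpha> - e)) \<le> Irho \<rho> t / (t * \<rho> t) \<and>
           Irho \<rho> t / (t * \<rho> t) \<le> e + exp e / (1 - (\<alpha> + e))"
proof -
  have "\<alpha> < 1" "\<alpha> - e < 1" using assms by auto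
  obtain \<tau> where "0 < \<tau>" and upper: "\<And>t. \<tau> \<le> t \<Longrightarrow> Irho \<rho> t \<le> \<tau> + exp e * (t * \<rho> t) / (1 - (\<alpha> + e))"
    using Irho_upper_bound[OF assms] by blast
  obtain \<tau>' where "0 < \<tau>'" and lower: "\<And>t. \<tau>' \<le> t \<Longrightarrow>
      exp (- e) * (t * \<rho> t) * (1 - (\<tau>' / t) powr (1 - (\<alpha> - e))) / (1 - (\<alpha> - e)) \<le> Irho \<rho> t"
    using Irho_lower_bound[OF \<open>0 < e\<close> order.refl \<open>\<alpha> - e < 1\<close>] by blast
  have lim1: "((\<lambda>t. \<tau> / (t * \<rho> t)) \<longlongrightarrow> 0) at_top"
    by (rule tendsto_divide_0[OF tendsto_const filterlim_mono[OF t_rho_at_top[OF \<open>\<alpha> < 1\<close>]]])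
      (simp_all add: at_top_le_at_infinity)
  have lim2: "((\<lambda>t. (\<tau>' / t) powr (1 - (\<alpha> - e))) \<longlongrightarrow> 0) at_top"
    using \<open>0 < \<tau>'\<close> \<open>\<alpha> - e < 1\<close> by real_asymp
  show ?thesis
    using order_tendstoD(2)[OF lim1 \<open>0 < e\<close>] order_tendstoD(2)[OF lim2 \<open>0 < e\<close>]
      eventually_ge_at_top[of \<tau>] eventually_ge_at_top[of \<tau>'] eventually_gt_at_top[of 0]
  proof eventually_elim
    case (elim t)
    then have "0 < t * \<rho> t" using pos[of t] by simp
    have "exp (- e) * (1 - e) / (1 - (\<alpha> - e))
        \<le> exp (- e) * (1 - (\<tau>' / t) powr (1 - (\<alpha> - e))) / (1 - (\<alpha> - e))"
      using elim \<open>\<alpha> - e < 1\<close> by (intro divide_right_mono mult_left_mono) auto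
    also have "\<dots> \<le> Irho \<rho> t / (t * \<rho> t)"
      using lower[OF elim(4)] \<open>0 < t * \<rho> t\<close> by (simp add: field_simps)
    finally have lower_est: "exp (- e) * (1 - e) / (1 - (\<alpha> - e)) \<le> Irho \<rho> t / (t * \<rho> t)" .
    have "Irho \<rho> t / (t * \<rho> t) \<le> (\<tau> + exp e * (t * \<rho> t) / (1 - (\<alpha> + e))) / (t * \<rho> t)"
      using upper[OF elim(3)] \<open>0 < t * \<rho> t\<close> by (simp add: divide_right_mono)
    then have "Irho \<rho> t / (t * \<rho> t) \<le> \<tau> / (t * \<rho> t) + exp e / (1 - (\<alpha> + e))"
      using \<open>0 < t * \<rho> t\<close> pos[of t] elim(5) by (simp add: add_divide_distrib)
    with lower_est elim(1) show ?case by simp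
  qed
qed

lemma Irho_div_t_rho_tendsto:
  assumes "\<alpha> < 1" shows "((\<lambda>t. Irho \<rho> t / (t * \<rho> t)) \<longlongrightarrow> 1 / (1 - \<alpha>)) at_top"
proof (rule tendsto_by_approximate_bounds)
  have "0 < 1 - \<alpha>" using assms by simp
  show "\<forall>\<^sub>F e in at_right 0. \<forall>\<^sub>F t in at_top.
      exp (- e) * (1 - e) / (1 - (\<alpha> - e)) \<le> Irho \<rho> t / (t * \<rho> t) \<and>
      Irho \<rho> t / (t * \<rho> t) \<le> e + exp e / (1 - (\<alpha> + e))"
    using eventually_at_right_real[OF \<open>0 < 1 - \<alpha>\<close>]
    by eventually_elim (auto intro: Irho_div_t_rho_approximation)
  show "((\<lambda>e. exp (- e) * (1 - e) / (1 - (\<alpha> - e))) \<longlongrightarrow> 1 / (1 - \<alpha>)) (at_right 0)"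
    using assms by (auto intro!: tendsto_eq_intros)
  show "((\<lambda>e. e + exp e / (1 - (\<alpha> + e))) \<longlongrightarrow> 1 / (1 - \<alpha>)) (at_right 0)"
    using assms by (auto intro!: tendsto_eq_intros)
qed

lemma Irho_div_t_rho_at_top:
  assumes "1 \<le> \<alpha>" shows "filterlim (\<lambda>t. Irho \<rho> t / (t * \<rho> t)) at_top at_top"
  unfolding filterlim_at_top
proof
  fix Z :: real
  have "filterlim (\<lambda>e::real. exp (- e) / e * (1 / 2)) at_top (at_right 0)"
    by real_asymp
  then have "\<forall>\<^sub>F e in at_right 0. Z \<le> exp (- e) / e * (1 / 2) \<and> 0 < e"
    by (auto simp: filterlim_at_top intro: eventually_conj eventually_at_right_less)
  then obtain e where e: "Z \<le> exp (- e) / e * (1 / 2)" "0 < e"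
    using eventually_happens'[OF trivial_limit_at_right_real] by blast
  obtain \<tau> where "0 < \<tau>" and lower: "\<And>t. \<tau> \<le> t \<Longrightarrow>
      exp (- e) * (t * \<rho> t) * (1 - (\<tau> / t) powr (1 - (1 - e))) / (1 - (1 - e)) \<le> Irho \<rho> t"
    using Irho_lower_bound[of e "1 - e"] e assms by auto
  have "((\<lambda>t. (\<tau> / t) powr e) \<longlongrightarrow> 0) at_top"
    using \<open>0 < \<tau>\<close> \<open>0 < e\<close> by real_asymp
  then have "\<forall>\<^sub>F t in at_top. (\<tau> / t) powr e < 1 / 2"
    by (rule order_tendstoD(2)) simp
  then show "\<forall>\<^sub>F t in at_top. Z \<le> Irho \<rho> t / (t * \<rho> t)"
    using eventually_ge_at_top[of \<tau>]
  proof eventually_elim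
    case (elim t)
    then have "0 < t * \<rho> t" using \<open>0 < \<tau>\<close> pos[of t] by simp
    have "Z \<le> exp (- e) / e * (1 / 2)" by (fact e(1))
    also have "\<dots> \<le> exp (- e) / e * (1 - (\<tau> / t) powr e)"
      using elim e by (intro mult_left_mono) auto
    also have "\<dots> \<le> Irho \<rho> t / (t * \<rho> t)"
      using lower[OF elim(2)] \<open>0 < t * \<rho> t\<close> by (simp add: field_simps)
    finally show ?case .
  qed
qed

lemma Irho_ratio_tendsto_1:
  assumes "1 \<le> \<alpha>" "1 \<le> c" shows "((\<lambda>t. Irho \<rho> (c * t) / Irho \<rho> t) \<longlongrightarrow> 1) at_top"
proof (rule tendsto_sandwich[OF _ _ tendsto_const])
  obtain \<tau> where "0 < \<tau>" and P: "\<And>s t. \<tau> \<le> s \<Longrightarrow> s \<le> t \<Longrightarrow> exp (- 1) * \<rho> t * (t / s) powr (\<alpha> - 1) \<le> \<rho> s"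
    using potter_bounds[of 1] by auto
  have "((\<lambda>t. 1 + exp 1 * (c - 1) * inverse (Irho \<rho> t / (t * \<rho> t))) \<longlongrightarrow> 1 + exp 1 * (c - 1) * 0) at_top"
    by (intro tendsto_intros tendsto_inverse_0_at_top Irho_div_t_rho_at_top assms)
  then show "((\<lambda>t. 1 + exp 1 * (c - 1) * inverse (Irho \<rho> t / (t * \<rho> t))) \<longlongrightarrow> 1) at_top"
    by simp
  show "\<forall>\<^sub>F t in at_top. 1 \<le> Irho \<rho> (c * t) / Irho \<rho> t"
    using eventually_gt_at_top[of 0]
  proof eventually_elim
    case (elim t)
    then show ?case
      using Irho_mono[of t "c * t"] Irho_pos[of t] assms(2) by (simp add: mult_le_cancel_right1)
  qed
  show "\<forall>\<^sub>F t in at_top. Irho \<rho> (c * t) / Irho \<rho> t \<le> 1 + exp 1 * (c - 1) * inverse (Irho \<rho> t / (t * \<rho> t))"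
    using eventually_ge_at_top[of \<tau>]
  proof eventually_elim
    case (elim t)
    then have "0 < t" "0 < \<rho> t" "0 < Irho \<rho> t"
      using \<open>0 < \<tau>\<close> pos[of t] Irho_pos[of t] by auto
    have "\<rho> x \<le> exp 1 * \<rho> t" if "x \<in> {t..c * t}" for x
    proof -
      have "exp (- 1) * \<rho> x * 1 \<le> exp (- 1) * \<rho> x * (x / t) powr (\<alpha> - 1)"
        using that \<open>0 < t\<close> assms(1) pos[of x] by (intro mult_left_mono ge_one_powr_ge_zero) auto
      also have "\<dots> \<le> \<rho> t" using P[of t x] elim that by auto
      finally show ?thesis by (simp add: exp_minus field_simps)
    qed
    then have "Irho \<rho> (c * t) - Irho \<rho> t \<le> exp 1 * \<rho> t * (c * t - t)"
      using \<open>0 < t\<close> assms(2) by (intro Irho_diff_le_const) auto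
    then show ?case
      using \<open>0 < t\<close> \<open>0 < \<rho> t\<close> \<open>0 < Irho \<rho> t\<close> by (simp add: field_simps)
  qed
qed

lemma Irho_ratio_tendsto:
  assumes "0 < c" shows "((\<lambda>t. Irho \<rho> (c * t) / Irho \<rho> t) \<longlongrightarrow> c powr max (1 - \<alpha>) 0) at_top"
proof (cases "\<alpha> < 1")
  case True
  define f where "f t = Irho \<rho> t / (t * \<rho> t)" for t
  have "(f \<longlongrightarrow> 1 / (1 - \<alpha>)) at_top"
    unfolding f_def by (rule Irho_div_t_rho_tendsto[OF True])
  moreover have "((\<lambda>t. f (c * t)) \<longlongrightarrow> 1 / (1 - \<alpha>)) at_top"
    using filterlim_compose[OF calculation filterlim_tendsto_pos_mult_at_top[OF tendsto_const assms filterlim_ident]] .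
  ultimately have "((\<lambda>t. f (c * t) * c * (\<rho> (c * t) / \<rho> t) / f t)
      \<longlongrightarrow> 1 / (1 - \<alpha>) * c * c powr - \<alpha> / (1 / (1 - \<alpha>))) at_top"
    using True by (intro tendsto_intros ratio_tendsto assms) auto
  moreover have "1 / (1 - \<alpha>) * c * c powr - \<alpha> / (1 / (1 - \<alpha>)) = c powr max (1 - \<alpha>) 0"
    using True assms by (simp add: powr_diff powr_minus field_simps)
  moreover have "\<forall>\<^sub>F t in at_top. f (c * t) * c * (\<rho> (c * t) / \<rho> t) / f t = Irho \<rho> (c * t) / Irho \<rho> t"
    using eventually_gt_at_top[of 0]
  proof eventually_elim
    case (elim t)
    then have "0 < \<rho> t" "0 < \<rho> (c * t)" "0 < Irho \<rho> t" "0 < Irho \<rho> (c * t)"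
      using pos Irho_pos assms by auto
    with elim assms show ?case by (simp add: f_def field_simps)
  qed
  ultimately show ?thesis by (auto intro: Lim_transform_eventually)
next
  case False
  then have "c powr max (1 - \<alpha>) 0 = 1" using assms by simp
  moreover have "((\<lambda>t. Irho \<rho> (c * t) / Irho \<rho> t) \<longlongrightarrow> 1) at_top"
  proof (cases "1 \<le> c")
    case False
    have "((\<lambda>t. Irho \<rho> (1 / c * (c * t)) / Irho \<rho> (c * t)) \<longlongrightarrow> 1) at_top"
      using \<open>\<not> \<alpha> < 1\<close> False assms
      by (intro filterlim_compose[OF Irho_ratio_tendsto_1 filterlim_tendsto_pos_mult_at_top[OF tendsto_const assms filterlim_ident]]) auto
    then have "((\<lambda>t. inverse (Irho \<rho> (1 / c * (c * t)) / Irho \<rho> (c * t))) \<longlongrightarrow> inverse 1) at_top"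
      by (intro tendsto_intros) auto
    then show ?thesis using assms by simp
  qed (use \<open>\<not> \<alpha> < 1\<close> Irho_ratio_tendsto_1 in auto)
  ultimately show ?thesis by simp
qed

lemma Irho_regularly_varying: "regularly_varying (max (1 - \<alpha>) 0) (Irho \<rho>)"
  unfolding regularly_varying_def using Irho_measurable Irho_pos Irho_ratio_tendsto by auto

lemma rho_tendsto_0:
  assumes "0 < \<alpha>" shows "(\<rho> \<longlongrightarrow> 0) at_top"
proof -
  obtain \<tau> where "0 < \<tau>" and P: "\<And>s t. \<tau> \<le> s \<Longrightarrow> s \<le> t \<Longrightarrow> exp (- (\<alpha> / 2)) * \<rho> t * (t / s) powr (\<alpha> - \<alpha> / 2) \<le> \<rho> s"
    using potter_bounds[of "\<alpha> / 2"] assms by auto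
  show ?thesis
  proof (rule tendsto_sandwich[OF _ _ tendsto_const])
    have "((\<lambda>t. exp (\<alpha> / 2) * \<rho> \<tau> * (\<tau> / t) powr (\<alpha> / 2)) \<longlongrightarrow> exp (\<alpha> / 2) * \<rho> \<tau> * 0) at_top"
      using \<open>0 < \<tau>\<close> assms by (intro tendsto_intros) real_asymp
    then show "((\<lambda>t. exp (\<alpha> / 2) * \<rho> \<tau> * (\<tau> / t) powr (\<alpha> / 2)) \<longlongrightarrow> 0) at_top"
      by simp
    show "\<forall>\<^sub>F t in at_top. 0 \<le> \<rho> t"
      using eventually_ge_at_top[of 0] by eventually_elim (simp add: pos less_imp_le)
    show "\<forall>\<^sub>F t in at_top. \<rho> t \<le> exp (\<alpha> / 2) * \<rho> \<tau> * (\<tau> / t) powr (\<alpha> / 2)"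
      using eventually_ge_at_top[of \<tau>]
    proof eventually_elim
      case (elim t)
      then have "0 < t" using \<open>0 < \<tau>\<close> by simp
      define q where "q = (t / \<tau>) powr (\<alpha> / 2)"
      have "0 < q" and q: "(\<tau> / t) powr (\<alpha> / 2) = 1 / q"
        using \<open>0 < t\<close> \<open>0 < \<tau>\<close> by (simp_all add: q_def powr_divide)
      moreover have "exp (- (\<alpha> / 2)) * \<rho> t * q \<le> \<rho> \<tau>"
        using P[OF order.refl elim] by (simp add: q_def)
      ultimately show ?case
        unfolding q by (simp add: exp_minus field_simps)
    qed
  qed
qed

lemma Irho_at_top:
  assumes "\<alpha> < 1" shows "filterlim (Irho \<rho>) at_top at_top"
proof -
  have lim: "filterlim (\<lambda>t. Irho \<rho> t / (t * \<rho> t) * (t * \<rho> t)) at_top at_top"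
    by (rule filterlim_tendsto_pos_mult_at_top[OF Irho_div_t_rho_tendsto[OF assms] _ t_rho_at_top[OF assms]])
      (use assms in simp)
  have "\<forall>\<^sub>F t in at_top. Irho \<rho> t / (t * \<rho> t) * (t * \<rho> t) = Irho \<rho> t"
    using eventually_gt_at_top[of 0]
  proof eventually_elim
    case (elim t)
    then have "t * \<rho> t \<noteq> 0" using pos[of t] by simp
    then show ?case by simp
  qed
  from filterlim_cong[OF refl refl this] lim show ?thesis by simp
qed

lemma grid_sum_div_Irho_Limsup:
  "Limsup (sequentially \<times>\<^sub>F at_top)
     (\<lambda>(n::nat, M::real). ereal (M * (\<Sum>l=1..n. \<rho> (real l * M)) / Irho \<rho> (real n * M))) < \<infinity>"
proof -
  obtain \<tau> where "0 < \<tau>" and doubling: "\<And>s t. \<tau> \<le> s \<Longrightarrow> s \<le> t \<Longrightarrow> t \<le> 2 * s \<Longrightarrow> \<rho> t \<le> exp 1 * \<rho> s"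
    using eventually_doubling_bound[of 1] by auto
  have "M * (\<Sum>l=1..n. \<rho> (real l * M)) / Irho \<rho> (real n * M) \<le> 2 * exp 1"
    if "1 \<le> n" "2 * \<tau> \<le> M" for n :: nat and M :: real
  proof -
    have "0 < Irho \<rho> (real n * M)" "0 \<le> Irho \<rho> (M / 2)"
      using that \<open>0 < \<tau>\<close> by (auto intro!: Irho_pos Irho_nonneg)
    moreover have "M * (\<Sum>l=1..n. \<rho> (real l * M)) \<le> 2 * exp 1 * (Irho \<rho> (real n * M) - Irho \<rho> (M / 2))"
      using grid_sum_le_Irho_half[OF doubling \<open>0 < \<tau>\<close> _ that(2,1)] by simp
    ultimately have "M * (\<Sum>l=1..n. \<rho> (real l * M)) \<le> 2 * exp 1 * Irho \<rho> (real n * M)"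
      by (smt (verit) exp_gt_zero mult_left_mono)
    with \<open>0 < Irho \<rho> (real n * M)\<close> show ?thesis by (simp add: field_simps)
  qed
  then have "\<forall>\<^sub>F (n, M) in sequentially \<times>\<^sub>F at_top.
      ereal (M * (\<Sum>l=1..n. \<rho> (real l * M)) / Irho \<rho> (real n * M)) \<le> ereal (2 * exp 1)"
    unfolding eventually_prod_filter
    by (intro exI[of _ "\<lambda>n::nat. 1 \<le> n"] exI[of _ "\<lambda>M. 2 * \<tau> \<le> M"] conjI eventually_ge_at_top) auto
  then have "Limsup (sequentially \<times>\<^sub>F at_top)
      (\<lambda>(n::nat, M::real). ereal (M * (\<Sum>l=1..n. \<rho> (real l * M)) / Irho \<rho> (real n * M))) \<le> ereal (2 * exp 1)"
    by (intro Limsup_bounded) (simp add: case_prod_beta')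
  then show ?thesis by (auto simp: le_less_trans)
qed

lemma grid_sum_Limsup_eq_0:
  assumes "Irho_inf \<rho> < \<infinity>"
  shows "Limsup at_top (\<lambda>M::real. ennreal M * (\<Sum>l. ennreal (\<rho> (real (Suc l) * M)))) = 0"
proof -
  obtain \<tau> where "0 < \<tau>" and doubling: "\<And>s t. \<tau> \<le> s \<Longrightarrow> s \<le> t \<Longrightarrow> t \<le> 2 * s \<Longrightarrow> \<rho> t \<le> exp 1 * \<rho> s"
    using eventually_doubling_bound[of 1] by auto
  have "Limsup at_top (\<lambda>M::real. ennreal M * (\<Sum>l. ennreal (\<rho> (real (Suc l) * M)))) \<le> 0 + ennreal \<epsilon>"
    if "0 < \<epsilon>" for \<epsilon>
  proof (rule Limsup_bounded)
    obtain t1 where "0 \<le> t1" and tail: "\<And>t. 0 \<le> t \<Longrightarrow> Irho \<rho> t - Irho \<rho> t1 \<le> \<epsilon> / (2 * exp 1)"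
      using Irho_tail_small[OF assms, of "\<epsilon> / (2 * exp 1)"] \<open>0 < \<epsilon>\<close> by auto
    show "\<forall>\<^sub>F M in at_top. ennreal M * (\<Sum>l. ennreal (\<rho> (real (Suc l) * M))) \<le> 0 + ennreal \<epsilon>"
      using eventually_ge_at_top[of "max (2 * \<tau>) (2 * t1)"]
    proof eventually_elim
      case (elim M)
      then have "0 < M" using \<open>0 < \<tau>\<close> by simp
      have "M * (\<Sum>l=1..n. \<rho> (real l * M)) \<le> \<epsilon>" for n
      proof (cases "n = 0")
        case False
        have "M * (\<Sum>l=1..n. \<rho> (real l * M)) \<le> 2 * exp 1 * (Irho \<rho> (real n * M) - Irho \<rho> (M / 2))"
          using grid_sum_le_Irho_half[OF doubling \<open>0 < \<tau>\<close> _ _, of M n] elim False by simp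
        also have "\<dots> \<le> 2 * exp 1 * (Irho \<rho> (real n * M) - Irho \<rho> t1)"
          using Irho_mono[of t1 "M / 2"] \<open>0 \<le> t1\<close> elim by simp
        also have "\<dots> \<le> \<epsilon>"
          using tail[of "real n * M"] \<open>0 < M\<close> by (simp add: field_simps)
        finally show ?thesis .
      qed (use \<open>0 < \<epsilon>\<close> in simp)
      then show ?case
        unfolding ennreal_grid_series_eq_SUP[OF less_imp_le[OF \<open>0 < M\<close>]]
        by (auto intro!: SUP_least ennreal_leI)
    qed
  qed
  then have "Limsup at_top (\<lambda>M::real. ennreal M * (\<Sum>l. ennreal (\<rho> (real (Suc l) * M)))) \<le> 0"
    by (rule ennreal_le_epsilon)
  then show ?thesis by simp
qed

text \<open>On the grid of mesh \<open>M = \<mu> * I T\<close> the cell bounds hold up to the factor \<open>exp e\<close> once \<open>M\<close> is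
  large; the cells beyond \<open>T\<close> and the first cell are negligible because \<open>\<rho> \<longlonglongrightarrow> 0\<close> and
  \<open>I M / I T \<longlonglongrightarrow> 0\<close>.\<close>

lemma grid_sum_approximation:
  assumes "(\<rho> \<longlongrightarrow> 0) at_top" "filterlim (Irho \<rho>) at_top at_top" "0 < \<mu>" "0 < e"
  defines "S T \<equiv> \<Sum>l=1..nat \<lceil>T / (\<mu> * Irho \<rho> T)\<rceil>. \<rho> (real l * (\<mu> * Irho \<rho> T))"
  shows "\<forall>\<^sub>F T in at_top. exp (- e) * (1 - e) \<le> \<mu> * S T \<and> \<mu> * S T \<le> e + exp e * (1 + e)"
proof -
  define M where "M T = \<mu> * Irho \<rho> T" for T
  have M_at_top: "filterlim M at_top at_top"
    unfolding M_def by (rule filterlim_tendsto_pos_mult_at_top[OF tendsto_const \<open>0 < \<mu>\<close> assms(2)])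
  obtain \<tau> where "0 < \<tau>" and doubling: "\<And>s t. \<tau> \<le> s \<Longrightarrow> s \<le> t \<Longrightarrow> t \<le> 2 * s \<Longrightarrow> \<rho> t \<le> exp e * \<rho> s"
    using eventually_doubling_bound[OF \<open>0 < e\<close>] by blast
  have "\<forall>\<^sub>F T in at_top. \<forall>x\<ge>T. \<rho> x < e / \<mu>"
    using assms by (intro eventually_all_ge_at_top order_tendstoD(2)[OF assms(1)]) simp
  moreover have "\<forall>\<^sub>F T in at_top. \<tau> \<le> M T"
    using M_at_top by (simp add: filterlim_at_top)
  moreover have "\<forall>\<^sub>F T in at_top. \<rho> (M T) < e / \<mu>"
    using assms by (intro order_tendstoD(2)[OF filterlim_compose[OF assms(1) M_at_top]]) simp
  moreover have "\<forall>\<^sub>F T in at_top. Irho \<rho> (M T) / Irho \<rho> T < e"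
    unfolding M_def using Irho_scaled_ratio_tendsto_0[OF assms(1-3)] \<open>0 < e\<close> by (rule order_tendstoD(2))
  ultimately show ?thesis
    using eventually_gt_at_top[of 0]
  proof eventually_elim
    case (elim T)
    then have "0 < Irho \<rho> T" "0 < M T" "M T = \<mu> * Irho \<rho> T"
      using Irho_pos \<open>0 < \<mu>\<close> \<open>0 < \<tau>\<close> by (auto simp: M_def)
    note bounds = grid_sum_bounds[OF doubling \<open>0 < \<tau>\<close> exp_gt_zero \<open>\<tau> \<le> M T\<close> \<open>0 < T\<close>,
        of "e / \<mu>", unfolded M_def, folded S_def]
    have "exp (- e) * (1 - e) \<le> exp (- e) * (1 - Irho \<rho> (M T) / Irho \<rho> T)"
      using elim by simp
    also have "\<dots> \<le> \<mu> * S T"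
      using bounds(1) elim(1) \<open>0 < Irho \<rho> T\<close> \<open>M T = \<mu> * Irho \<rho> T\<close>
      by (simp add: exp_minus field_simps less_imp_le)
    finally have "exp (- e) * (1 - e) \<le> \<mu> * S T" .
    moreover have "\<mu> * S T \<le> \<mu> * \<rho> (M T) + exp e * (1 - Irho \<rho> (M T) / Irho \<rho> T + e)"
      using bounds(2) elim(1) \<open>0 < Irho \<rho> T\<close> \<open>M T = \<mu> * Irho \<rho> T\<close> \<open>0 < \<mu>\<close>
      by (simp add: field_simps less_imp_le)
    moreover have "\<mu> * \<rho> (M T) \<le> e" "0 \<le> Irho \<rho> (M T) / Irho \<rho> T"
      using elim \<open>0 < \<mu>\<close> \<open>0 < M T\<close> \<open>0 < Irho \<rho> T\<close> Irho_nonneg[of "M T"] by (simp_all add: field_simps)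
    ultimately show ?case
      by (smt (verit) exp_gt_zero mult_left_mono)
  qed
qed

lemma grid_sum_tendsto:
  assumes "(\<rho> \<longlongrightarrow> 0) at_top" and "filterlim (Irho \<rho>) at_top at_top" and "0 < \<mu>"
  shows "((\<lambda>T. \<Sum>l=1..nat \<lceil>T / (\<mu> * Irho \<rho> T)\<rceil>. \<rho> (real l * (\<mu> * Irho \<rho> T))) \<longlongrightarrow> 1 / \<mu>) at_top"
proof -
  define S where "S T = (\<Sum>l=1..nat \<lceil>T / (\<mu> * Irho \<rho> T)\<rceil>. \<rho> (real l * (\<mu> * Irho \<rho> T)))" for T
  have "((\<lambda>T. \<mu> * S T) \<longlongrightarrow> 1) at_top"
  proof (rule tendsto_by_approximate_bounds)
    show "\<forall>\<^sub>F e in at_right 0. \<forall>\<^sub>F T in at_top. exp (- e) * (1 - e) \<le> \<mu> * S T \<and> \<mu> * S T \<le> e + exp e * (1 + e)"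
      using eventually_at_right_less
      by eventually_elim (use grid_sum_approximation[OF assms] in \<open>simp add: S_def\<close>)
    show "((\<lambda>e. exp (- e) * (1 - e)) \<longlongrightarrow> 1) (at_right (0::real))"
      by real_asymp
    show "((\<lambda>e. e + exp e * (1 + e)) \<longlongrightarrow> 1) (at_right (0::real))"
      by real_asymp
  qed
  then have "((\<lambda>T. \<mu> * S T / \<mu>) \<longlongrightarrow> 1 / \<mu>) at_top"
    by (intro tendsto_divide) (use \<open>0 < \<mu>\<close> in auto)
  then show ?thesis
    using \<open>0 < \<mu>\<close> by (simp add: S_def)
qed

end

theorem lemma2p9:
  fixes \<alpha> :: real and \<rho> :: "real \<Rightarrow> real"
  assumes "\<alpha> \<ge> 0" and "RV_class \<alpha> \<rho>"
  shows "regularly_varying (max (1 - \<alpha>) 0) (Irho \<rho>)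
       \<and> Limsup (sequentially \<times>\<^sub>F at_top)
           (\<lambda>(n::nat, M::real). ereal (M * (\<Sum>l=1..n. \<rho> (real l * M)) / Irho \<rho> (real n * M))) < \<infinity>
       \<and> (Irho_inf \<rho> < \<infinity> \<longrightarrow>
            Limsup at_top (\<lambda>M::real. ennreal M * (\<Sum>l. ennreal (\<rho> (real (Suc l) * M)))) = 0)
       \<and> (\<forall>\<mu>>0. \<alpha> \<le> 1 \<and> (\<alpha> = 0 \<longrightarrow> (\<rho> \<longlongrightarrow> 0) at_top) \<and> (\<alpha> = 1 \<longrightarrow> Irho_inf \<rho> = \<infinity>) \<longrightarrow>
            ((\<lambda>T. \<Sum>l=1..nat \<lceil>T / (\<mu> * Irho \<rho> T)\<rceil>. \<rho> (real l * (\<mu> * Irho \<rho> T)))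
               \<longlongrightarrow> 1 / \<mu>) at_top)"
proof -
  interpret regularly_varying_density \<rho> \<alpha>
    using assms by unfold_locales (auto simp: RV_class_def)
  have "((\<lambda>T. \<Sum>l=1..nat \<lceil>T / (\<mu> * Irho \<rho> T)\<rceil>. \<rho> (real l * (\<mu> * Irho \<rho> T))) \<longlongrightarrow> 1 / \<mu>) at_top"
    if "0 < \<mu>" "\<alpha> \<le> 1" "\<alpha> = 0 \<longrightarrow> (\<rho> \<longlongrightarrow> 0) at_top" "\<alpha> = 1 \<longrightarrow> Irho_inf \<rho> = \<infinity>" for \<mu>
  proof (rule grid_sum_tendsto)
    show "(\<rho> \<longlongrightarrow> 0) at_top"
      using that rho_tendsto_0 assms(1) by (cases "\<alpha> = 0") auto
    show "filterlim (Irho \<rho>) at_top at_top"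
      using that Irho_at_top Irho_at_top_if_Irho_inf_infinite by (cases "\<alpha> < 1") auto
  qed (fact \<open>0 < \<mu>\<close>)
  then show ?thesis
    using Irho_regularly_varying grid_sum_div_Irho_Limsup grid_sum_Limsup_eq_0 by blast
qed

end
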